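(* When the weighted GK algorithm described in the context is run, after the deletion step performed once $k$ updates have been seen, the number of type-2 elements stored in WQS is $O(\ell\log t_k)$.
   Context: A weighted stream consists of updates $(x_i,w(x_i))$, $i=1,2,\dots$, with $x_i$ from a totally ordered universe and $w(x_i)$ a positive integer. Let $W_k=\sum_{i=1}^k w(x_i)$, $\ell=1/\varepsilon$, $t_k=\lfloor\varepsilon W_k\rfloor$, and $t_0(x_k)=\lfloor\varepsilon(W_{k-1}+1)\rfloor$. The summary WQS stores elements $e_1<\dots<e_s$ of the stream with weights $w(e)$ and integers $\mathrm{rmin}(e),\mathrm{rmax}(e)$; a sentinel $e_0$ has $\mathrm{rmin}(e_0)=\mathrm{rmax}(e_0)=0$, $w(e_0)=1$; an element $+\infty$, larger than all others, is inserted at the start of the stream and always stored as $e_s$. Insert$(x,w(x))$: store $x$; let $e_i$ be the smallest stored element with $e_i>x$; set $\mathrm{rmin}(x)=\mathrm{rmin}(e_{i-1})+w(e_{i-1})$, $\mathrm{rmax}(x)=\mathrm{rmax}(e_i)$, and increase $\mathrm{rmin}(e_j),\mathrm{rmax}(e_j)$ by $w(x)$ for all $j\ge i$. Delete$(e_i)$: remove $e_i$, leaving other values unchanged. Define $g_i=\mathrm{rmin}(e_i)-(\mathrm{rmin}(e_{i-1})+w(e_{i-1})-1)$, $\Delta_i=\mathrm{rmax}(e_i)-\mathrm{rmin}(e_i)$, $G_i=g_i+w(e_i)-1$. Band values: after $k$ updates, $\mathbf{v}(x)=0$ if $t_k=t_0(x)$, and otherwise $\mathbf{v}(x)$ is the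 unique integer $\alpha\ge1$ with $2^{\alpha-1}+(t_k\bmod 2^{\alpha-1})\le t_k-t_0(x)<2^{\alpha}+(t_k\bmod 2^{\alpha})$. The segment $\mathrm{seg}(e_i)$ is the maximal set of consecutive stored elements $e_j,\dots,e_{i-1}$ all with band value strictly less than $\mathbf{v}(e_i)$; $G^*_i=G_i+\sum_{e_k\in\mathrm{seg}(e_i)}G_k$. Weighted GK algorithm: for each arriving update $(x_j,w(x_j))$: (i) run Insert$(x_j,w(x_j))$; (ii) (deletion step) while there is a stored $e_i$ ($1\le i<s$) with $\mathbf{v}(e_i)\le\mathbf{v}(e_{i+1})$ and $G^*_i+g_{i+1}+\Delta_{i+1}\le t_j$, run Delete on $e_i$ and on every element of $\mathrm{seg}(e_i)$. After the deletion step once $k$ updates have been seen, a stored element $e_i$ ($1\le i<s$) is type-1 if $\mathbf{v}(e_i)>\mathbf{v}(e_{i+1})$, and type-2 if it is not type-1 (in which case $G^*_i+g_{i+1}+\Delta_{i+1}>t_k$). *)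

theory Defs
  imports Complex_Main
begin

text \<open>Updates are indexed from 1: the j-th update is (x j, w j).\<close>

definition Wsum :: "(nat \<Rightarrow> nat) \<Rightarrow> nat \<Rightarrow> nat" where
  "Wsum w k = (\<Sum>i=1..k. w i)"

definition tval :: "real \<Rightarrow> (nat \<Rightarrow> nat) \<Rightarrow> nat \<Rightarrow> nat" where
  "tval \<epsilon> w k = nat \<lfloor>\<epsilon> * real (Wsum w k)\<rfloor>"

definition t0val :: "real \<Rightarrow> (nat \<Rightarrow> nat) \<Rightarrow> nat \<Rightarrow> nat" where
  "t0val \<epsilon> w k = nat \<lfloor>\<epsilon> * (real (Wsum w (k - 1)) + 1)\<rfloor>"

definition band :: "nat \<Rightarrow> nat \<Rightarrow> nat" where
  "band t t0 = (if t = t0 then 0 else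
     (THE \<alpha>. 1 \<le> \<alpha> \<and> 2^(\<alpha>-1) + t mod 2^(\<alpha>-1) \<le> t - t0 \<and> t - t0 < 2^\<alpha> + t mod 2^\<alpha>))"

datatype 'a ext = Fin 'a | PInf

fun ext_gt :: "'a::linorder ext \<Rightarrow> 'a \<Rightarrow> bool" where
  "ext_gt (Fin a) x = (x < a)"
| "ext_gt PInf x = True"

record 'a entry =
  ev :: "'a ext"
  ew :: nat
  ermin :: int
  ermax :: int
  et0 :: nat

text \<open>A WQS state is the list [e_1, ..., e_s] (sorted); e_i = L ! (i-1).
  Index 0 denotes the sentinel e_0 with rmin = rmax = 0, w = 1.\<close>

definition wE :: "'a entry list \<Rightarrow> nat \<Rightarrow> int" where
  "wE L i = (if i = 0 then 1 else int (ew (L ! (i - 1))))"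

definition rminE :: "'a entry list \<Rightarrow> nat \<Rightarrow> int" where
  "rminE L i = (if i = 0 then 0 else ermin (L ! (i - 1)))"

definition rmaxE :: "'a entry list \<Rightarrow> nat \<Rightarrow> int" where
  "rmaxE L i = (if i = 0 then 0 else ermax (L ! (i - 1)))"

definition vE :: "nat \<Rightarrow> 'a entry list \<Rightarrow> nat \<Rightarrow> nat" where
  "vE t L i = band t (et0 (L ! (i - 1)))"

definition gE :: "'a entry list \<Rightarrow> nat \<Rightarrow> int" where
  "gE L i = rminE L i - (rminE L (i - 1) + wE L (i - 1) - 1)"

definition DeltaE :: "'a entry list \<Rightarrow> nat \<Rightarrow> int" where
  "DeltaE L i = rmaxE L i - rminE L i"

definition GE :: "'a entry list \<Rightarrow> nat \<Rightarrow> int" where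
  "GE L i = gE L i + wE L i - 1"

text \<open>seg(e_i) = {e_j, ..., e_(i-1)} with j = segStart (empty if j = i).\<close>
definition segStart :: "nat \<Rightarrow> 'a entry list \<Rightarrow> nat \<Rightarrow> nat" where
  "segStart t L i = (LEAST j. 1 \<le> j \<and> (\<forall>m. j \<le> m \<and> m < i \<longrightarrow> vE t L m < vE t L i))"

definition GstarE :: "nat \<Rightarrow> 'a entry list \<Rightarrow> nat \<Rightarrow> int" where
  "GstarE t L i = GE L i + (\<Sum>m\<in>{segStart t L i..<i}. GE L m)"

definition deletable :: "nat \<Rightarrow> 'a entry list \<Rightarrow> nat \<Rightarrow> bool" where
  "deletable t L i \<longleftrightarrow> 1 \<le> i \<and> i < length L \<and> vE t L i \<le> vE t L (Suc i) \<and>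
     GstarE t L i + gE L (Suc i) + DeltaE L (Suc i) \<le> int t"

text \<open>Delete e_i and all of seg(e_i), i.e. e_j..e_i with j = segStart.\<close>
definition delete_seg :: "nat \<Rightarrow> 'a entry list \<Rightarrow> nat \<Rightarrow> 'a entry list" where
  "delete_seg t L i = take (segStart t L i - 1) L @ drop i L"

text \<open>0-based position of the smallest stored element greater than x.\<close>
definition ins_pos :: "'a::linorder entry list \<Rightarrow> 'a \<Rightarrow> nat" where
  "ins_pos L x = (LEAST p. p < length L \<and> ext_gt (ev (L ! p)) x)"

definition wqs_insert :: "'a::linorder entry list \<Rightarrow> 'a \<Rightarrow> nat \<Rightarrow> nat \<Rightarrow> 'a entry list" where
  "wqs_insert L x wx t0 =
    (let p = ins_pos L x;
         new = \<lparr>ev = Fin x, ew = wx, ermin = rminE L p + wE L p, ermax = ermax (L ! p), et0 = t0\<rparr>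
     in take p L @ [new] @
        map (\<lambda>e. e\<lparr>ermin := ermin e + int wx, ermax := ermax e + int wx\<rparr>) (drop p L))"

text \<open>Initial state: only +infinity is stored (rmin = rmax = rmin(e_0)+w(e_0) = 1, t_0 = 0).\<close>
definition wqs_init :: "'a entry list" where
  "wqs_init = [\<lparr>ev = PInf, ew = 1, ermin = 1, ermax = 1, et0 = 0\<rparr>]"

definition del_step :: "nat \<Rightarrow> 'a entry list \<Rightarrow> 'a entry list \<Rightarrow> bool" where
  "del_step t A B \<longleftrightarrow> (\<exists>i. deletable t A i \<and> B = delete_seg t A i)"

text \<open>gk_reach eps x w k L: L is a possible WQS state after the deletion step
  following the k-th update (any order of deletions in the while loop).\<close>
inductive gk_reach :: "real \<Rightarrow> (nat \<Rightarrow> 'a::linorder) \<Rightarrow> (nat \<Rightarrow> nat) \<Rightarrow> nat \<Rightarrow> 'a entry list \<Rightarrow> bool"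
  for \<epsilon> x w where
  init: "gk_reach \<epsilon> x w 0 wqs_init"
| step: "gk_reach \<epsilon> x w k L \<Longrightarrow>
    (del_step (tval \<epsilon> w (Suc k)))\<^sup>*\<^sup>*
       (wqs_insert L (x (Suc k)) (w (Suc k)) (t0val \<epsilon> w (Suc k))) L' \<Longrightarrow>
    \<not> (\<exists>i. deletable (tval \<epsilon> w (Suc k)) L' i) \<Longrightarrow>
    gk_reach \<epsilon> x w (Suc k) L'"

definition type2_count :: "nat \<Rightarrow> 'a entry list \<Rightarrow> nat" where
  "type2_count t L = card {i. 1 \<le> i \<and> i < length L \<and> \<not> (vE t L i > vE t L (Suc i))}"

end

theory Submission
  imports Defs
begin

(*
  Write G(e) = g + w - 1 for a stored element e. The G-values of e_1, ..., e_i add up to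
  rmin(e_i) + w(e_i) - 1, and a deletion merges the G-values of the deleted segment into the
  surviving right neighbour, whose band is at least theirs. Since the order of bands is preserved
  as t grows, merging never moves mass into a lower band: at every later time t' and for every
  \<alpha>, the total G of the stored elements of band at most \<alpha> is bounded by 1 plus the weight of the
  updates whose band at t' is at most \<alpha>. These updates arrived during the last 2^(\<alpha>+1) ticks,
  so their weight is below 2^(\<alpha>+1)/\<epsilon>.

  Conversely, a type-2 element e_i whose successor has band \<alpha> survived the deletion step, so
  the G-values of seg(e_i), e_i and e_(i+1), all of band at most \<alpha>, add up to at least
  t - t_0(e_(i+1)) + 1 \<ge> 2^(\<alpha>-1). These windows cover every stored element at most twice, so each
  band contains O(1/\<epsilon>) type-2 elements, and only O(log t) bands occur.
*)

lemma le_of_dvd_of_less_add: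
  fixes d m n :: nat
  assumes "d dvd m" "d dvd n" "n < m + d"
  shows "n \<le> m"
proof -
  obtain p q where "m = d * p" "n = d * q" using assms(1,2) by (auto elim!: dvdE)
  then have "d * q < d * Suc p" using assms(3) by simp
  then have "q < Suc p" by (simp only: mult_less_cancel1)
  then show ?thesis using \<open>m = d * p\<close> \<open>n = d * q\<close> by simp
qed

lemma round_down_Suc_power:
  "2^a * ((t::nat) div 2^a) \<le> 2^Suc a * (t div 2^Suc a) + 2^a"
proof -
  have "t div 2^a div 2 = t div 2^Suc a" by (metis div_mult2_eq power_Suc2)
  then have "t div 2^a \<le> 2 * (t div 2^Suc a) + 1" by linarith
  then have "2^a * (t div 2^a) \<le> 2^a * (2 * (t div 2^Suc a) + 1)" by (rule mult_le_mono2)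
  then show ?thesis by (simp add: algebra_simps)
qed

lemma floor_log_bounds:
  assumes "2 \<le> t"
  defines "A \<equiv> nat \<lfloor>log 2 (real t)\<rfloor> + 1"
  shows "t < 2 ^ A" "real A + 1 \<le> 3 * log 2 (real t)"
proof -
  have "1 \<le> log 2 (real t)" using assms(1) by simp
  then have A: "real A = of_int \<lfloor>log 2 (real t)\<rfloor> + 1" unfolding A_def by simp
  then have "log 2 (real t) < real A" by linarith
  then have "real t < 2 powr real A" using assms(1) by (simp add: log_less_iff)
  then show "t < 2 ^ A" by (simp add: powr_realpow flip: of_nat_less_iff)
  show "real A + 1 \<le> 3 * log 2 (real t)" using A \<open>1 \<le> log 2 (real t)\<close> by linarith
qed

lemma card_le_2_if_consecutive:
  fixes S :: "nat set"
  assumes "finite S" "\<And>a b. a \<in> S \<Longrightarrow> b \<in> S \<Longrightarrow> a < b \<Longrightarrow> b = Suc a"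
  shows "card S \<le> 2"
proof (cases "S = {}")
  case False
  define a where "a = Min S"
  have "a \<in> S" using False assms(1) by (simp add: a_def)
  have "S \<subseteq> {a, Suc a}"
  proof
    fix b assume "b \<in> S"
    then have "a \<le> b" using assms(1) by (simp add: a_def)
    then show "b \<in> {a, Suc a}" using assms(2)[OF \<open>a \<in> S\<close> \<open>b \<in> S\<close>] by (cases "a = b") auto
  qed
  then have "card S \<le> card {a, Suc a}" by (intro card_mono) simp_all
  then show ?thesis by simp
qed simp

lemma in_set_take_drop_nth:
  assumes "e \<in> set (take (i - k) (drop k xs))"
  obtains m where "k \<le> m" "m < i" "m < length xs" "e = xs ! m"
proof -
  obtain n where "n < length (take (i - k) (drop k xs))" "e = take (i - k) (drop k xs) ! n"
    using assms by (auto simp: in_set_conv_nth)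
  then show ?thesis using that[of "k + n"] by auto
qed

lemma take_drop_nth_decomp:
  assumes "k \<le> i" "i < length xs"
  shows "xs = take k xs @ take (i - k) (drop k xs) @ [xs ! i] @ drop (Suc i) xs"
proof -
  have "take k xs @ take (i - k) (drop k xs) = take i xs"
    using assms by (metis le_add_diff_inverse take_add)
  then have "take k xs @ take (i - k) (drop k xs) @ [xs ! i] @ drop (Suc i) xs =
      take i xs @ [xs ! i] @ drop (Suc i) xs"
    by (metis append.assoc)
  also have "\<dots> = xs" using assms(2) by (simp add: id_take_nth_drop[symmetric])
  finally show ?thesis by simp
qed

lemma nth_take_append_drop:
  assumes "k \<le> i" "i \<le> length xs" "m < length xs - i + k"
  shows "(take k xs @ drop i xs) ! m = (if m < k then xs ! m else xs ! (m - k + i))"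
  using assms by (auto simp: nth_append min_def add.commute)

section \<open>Bands\<close>

(* The paper's condition for band t t0 = \<alpha> reads: band_exceeds t t0 (\<alpha> - 1) and not band_exceeds t t0 \<alpha>. *)
definition band_exceeds :: "nat \<Rightarrow> nat \<Rightarrow> nat \<Rightarrow> bool" where
  "band_exceeds t t0 a \<longleftrightarrow> 2^a + t mod 2^a \<le> t - t0"

lemma band_exceeds_iff:
  assumes "t0 \<le> t"
  shows "band_exceeds t t0 a \<longleftrightarrow> t0 + 2^a \<le> 2^a * (t div 2^a)"
proof -
  have "t = 2^a * (t div 2^a) + t mod 2^a" by simp
  then show ?thesis using assms unfolding band_exceeds_def by linarith
qed

lemma band_exceeds_antimono:
  assumes "band_exceeds t t0 b" "a \<le> b"
  shows "band_exceeds t t0 a"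
proof -
  have "t mod 2^a \<le> t mod 2^b"
    using take_bit_tightened_less_eq_nat[OF \<open>a \<le> b\<close>] by (simp add: take_bit_eq_mod)
  moreover have "(2::nat)^a \<le> 2^b" using \<open>a \<le> b\<close> by simp
  ultimately show ?thesis using assms(1) unfolding band_exceeds_def by linarith
qed

lemma not_band_exceeds_if_less_power: "t < 2^a \<Longrightarrow> \<not> band_exceeds t t0 a"
  unfolding band_exceeds_def by linarith

lemma band_eq_Least:
  assumes "t0 \<le> t"
  shows "band t t0 = (LEAST a. \<not> band_exceeds t t0 a)"
proof -
  define A where "A = (LEAST a. \<not> band_exceeds t t0 a)"
  have "\<not> band_exceeds t t0 t"
    by (rule not_band_exceeds_if_less_power) (simp add: less_exp)
  then have not_A: "\<not> band_exceeds t t0 A"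
    unfolding A_def by (rule LeastI)
  have below_A: "band_exceeds t t0 b" if "b < A" for b
    using that not_less_Least unfolding A_def by blast
  show ?thesis
  proof (cases "t = t0")
    case True
    then have "\<not> band_exceeds t t0 0" unfolding band_exceeds_def by simp
    then show ?thesis using True by (simp add: band_def Least_eq_0)
  next
    case False
    then have "band_exceeds t t0 0" unfolding band_exceeds_def using assms by simp
    then have "1 \<le> A" using not_A by (cases A) auto
    have "(THE \<alpha>. 1 \<le> \<alpha> \<and> 2^(\<alpha>-1) + t mod 2^(\<alpha>-1) \<le> t - t0 \<and> t - t0 < 2^\<alpha> + t mod 2^\<alpha>) = A"
    proof (rule the_equality)
      show "1 \<le> A \<and> 2^(A-1) + t mod 2^(A-1) \<le> t - t0 \<and> t - t0 < 2^A + t mod 2^A"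
        using \<open>1 \<le> A\<close> below_A[of "A-1"] not_A unfolding band_exceeds_def by auto
    next
      fix \<beta> assume "1 \<le> \<beta> \<and> 2^(\<beta>-1) + t mod 2^(\<beta>-1) \<le> t - t0 \<and> t - t0 < 2^\<beta> + t mod 2^\<beta>"
      then have "band_exceeds t t0 (\<beta>-1)" "\<not> band_exceeds t t0 \<beta>" "1 \<le> \<beta>"
        unfolding band_exceeds_def by auto
      moreover have "\<not> A < \<beta>"
        using band_exceeds_antimono[of t t0 "\<beta>-1" A] \<open>band_exceeds t t0 (\<beta>-1)\<close> not_A by linarith
      ultimately show "\<beta> = A" using below_A by (meson linorder_neqE_nat)
    qed
    then show ?thesis using False unfolding band_def A_def by (simp only: if_False)
  qed
qed

lemma band_le_iff:
  assumes "t0 \<le> t"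
  shows "band t t0 \<le> a \<longleftrightarrow> \<not> band_exceeds t t0 a"
proof
  have "\<not> band_exceeds t t0 (LEAST a. \<not> band_exceeds t t0 a)"
    by (rule LeastI[of _ t], rule not_band_exceeds_if_less_power) (simp add: less_exp)
  then show "band t t0 \<le> a \<Longrightarrow> \<not> band_exceeds t t0 a"
    using band_exceeds_antimono band_eq_Least[OF assms] by metis
  show "\<not> band_exceeds t t0 a \<Longrightarrow> band t t0 \<le> a"
    using band_eq_Least[OF assms] by (simp add: Least_le)
qed

lemma not_band_exceeds_band: "t0 \<le> t \<Longrightarrow> \<not> band_exceeds t t0 (band t t0)"
  using band_le_iff by blast

lemma band_le_if_less_power: "t0 \<le> t \<Longrightarrow> t < 2^a \<Longrightarrow> band t t0 \<le> a"
  using band_le_iff not_band_exceeds_if_less_power by blast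

lemma power_band_le:
  assumes "t0 \<le> t"
  shows "2 ^ band t t0 \<le> 2 * (t - t0 + 1)"
proof (cases "band t t0")
  case (Suc b)
  then have "band_exceeds t t0 b" using band_le_iff[OF assms, of b] by simp
  then show ?thesis using Suc unfolding band_exceeds_def by simp
qed simp

lemma band_le_imp_late:
  assumes "t0 \<le> t" "band t t0 \<le> \<alpha>"
  shows "t + 2 \<le> t0 + 2 ^ Suc \<alpha>"
proof -
  have "t - t0 < 2^\<alpha> + t mod 2^\<alpha>"
    using assms band_le_iff unfolding band_exceeds_def by (simp add: not_le)
  moreover have "t mod 2^\<alpha> < 2^\<alpha>" by simp
  moreover have "(2::nat) ^ Suc \<alpha> = 2 * 2^\<alpha>" by simp
  ultimately show ?thesis using assms(1) by linarith
qed

lemma band_mono_time: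
  assumes "t0 \<le> t" "t \<le> t'"
  shows "band t t0 \<le> band t' t0"
proof -
  have "band_exceeds t' t0 a" if "band_exceeds t t0 a" for a
  proof -
    have "2^a * (t div 2^a) \<le> 2^a * (t' div 2^a)" using assms(2) by (simp add: div_le_mono)
    moreover have "t0 + 2^a \<le> 2^a * (t div 2^a)" using that band_exceeds_iff[OF assms(1)] by simp
    ultimately have "t0 + 2^a \<le> 2^a * (t' div 2^a)" by linarith
    then show ?thesis using band_exceeds_iff[of t0 t'] assms by simp
  qed
  moreover have "\<not> band_exceeds t' t0 (band t' t0)"
    using not_band_exceeds_band assms by (meson le_trans)
  ultimately show ?thesis using band_le_iff[OF assms(1), of "band t' t0"] by blast
qed

lemma band_antimono_t0:
  assumes "x \<le> y" "y \<le> t"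
  shows "band t y \<le> band t x"
proof -
  have "band_exceeds t x a" if "band_exceeds t y a" for a
    using that assms unfolding band_exceeds_def by linarith
  moreover have "\<not> band_exceeds t x (band t x)"
    using not_band_exceeds_band assms by (meson le_trans)
  ultimately show ?thesis using band_le_iff[OF assms(2), of "band t x"] by blast
qed

lemma band_exceeds_of_same_band:
  assumes "x < y" "y \<le> t" "t \<le> t'" "band t x = \<beta>" "band t y = \<beta>" "\<beta> \<le> \<alpha>"
    and "band_exceeds t' x \<alpha>"
  shows "band_exceeds t' y \<alpha>"
proof -
  have "x \<le> t" "x \<le> t'" "y \<le> t'" using assms(1-3) by linarith+
  have x_band: "\<not> band_exceeds t x \<beta>"
    using not_band_exceeds_band[OF \<open>x \<le> t\<close>] assms(4) by simp
  obtain b where b: "\<beta> = Suc b"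
  proof (cases \<beta>)
    case 0
    then have "t \<le> x" using x_band unfolding band_exceeds_def by simp
    then show ?thesis using assms(1,2) by linarith
  qed
  have "band_exceeds t y b" using band_le_iff[OF assms(2), of b] assms(5) b by simp
  then have "y + 2^b \<le> 2^b * (t div 2^b)" using band_exceeds_iff[OF assms(2)] by simp
  then have y_le: "y \<le> 2^\<beta> * (t div 2^\<beta>)" using round_down_Suc_power[of b t] unfolding b by linarith
  have x_gt: "2^\<beta> * (t div 2^\<beta>) < x + 2^\<beta>"
    using x_band band_exceeds_iff[OF \<open>x \<le> t\<close>] by simp
  (* x and y lie in the aligned block (F - 2^\<beta>, F] with F = 2^\<beta> * (t div 2^\<beta>), while the
     threshold M of band \<alpha> at time t' is a multiple of 2^\<beta>, so it cannot separate them. *)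
  define M where "M = 2^\<alpha> * (t' div 2^\<alpha>) - 2^\<alpha>"
  have x_le: "x + 2^\<alpha> \<le> 2^\<alpha> * (t' div 2^\<alpha>)"
    using assms(7) band_exceeds_iff[OF \<open>x \<le> t'\<close>] by simp
  have "(2::nat)^\<beta> dvd 2^\<alpha>" using assms(6) by (simp add: le_imp_power_dvd)
  then have "2^\<beta> dvd M" unfolding M_def by (intro dvd_diff_nat dvd_mult2) simp_all
  moreover have "2^\<beta> * (t div 2^\<beta>) < M + 2^\<beta>" using x_gt x_le unfolding M_def by linarith
  ultimately have "2^\<beta> * (t div 2^\<beta>) \<le> M" by (intro le_of_dvd_of_less_add) simp_all
  then have "y + 2^\<alpha> \<le> 2^\<alpha> * (t' div 2^\<alpha>)" using y_le x_le unfolding M_def by linarith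
  then show ?thesis using band_exceeds_iff[OF \<open>y \<le> t'\<close>] by simp
qed

lemma band_le_mono_time:
  assumes "x \<le> t" "y \<le> t" "t \<le> t'" "band t x \<le> band t y"
  shows "band t' x \<le> band t' y"
proof (cases "y \<le> x")
  case True
  then show ?thesis using band_antimono_t0[of y x t'] assms(1,3) by simp
next
  case False
  have same: "band t x = band t y"
    using band_antimono_t0[of x y t] False assms(2,4) by simp
  have "y \<le> t'" using assms(2,3) by simp
  have "\<not> band_exceeds t' x (band t' y)"
  proof
    assume "band_exceeds t' x (band t' y)"
    moreover have "band t y \<le> band t' y" using band_mono_time assms(2,3) .
    ultimately have "band_exceeds t' y (band t' y)"
      using band_exceeds_of_same_band[of x y t t' "band t y"] False same assms(2,3) by simp
    then show False using not_band_exceeds_band[OF \<open>y \<le> t'\<close>] by contradiction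
  qed
  then show ?thesis using band_le_iff[of x t'] assms(1,3) by simp
qed

section \<open>Stream times and arrived weight\<close>

lemma Wsum_Suc: "Wsum w (Suc k) = Wsum w k + w (Suc k)"
  by (simp add: Wsum_def)

lemma Wsum_split:
  assumes "1 \<le> u" "u \<le> k"
  shows "Wsum w k = Wsum w (u - 1) + (\<Sum>v = u..k. w v)"
proof -
  have "{1..k} = {1..u - 1} \<union> {u..k}" using assms by auto
  then show ?thesis unfolding Wsum_def by (simp add: sum.union_disjoint)
qed

lemma tval_mono:
  assumes "0 < \<epsilon>" "k \<le> k'"
  shows "tval \<epsilon> w k \<le> tval \<epsilon> w k'"
proof -
  have "Wsum w k \<le> Wsum w k'" unfolding Wsum_def using assms(2) by (intro sum_mono2) auto
  then have "\<epsilon> * real (Wsum w k) \<le> \<epsilon> * real (Wsum w k')" using assms(1) by simp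
  then show ?thesis unfolding tval_def by (intro nat_mono floor_mono)
qed

lemma tval_le_t0val_Suc:
  assumes "0 < \<epsilon>"
  shows "tval \<epsilon> w k \<le> t0val \<epsilon> w (Suc k)"
proof -
  have "\<epsilon> * real (Wsum w k) \<le> \<epsilon> * (real (Wsum w k) + 1)" using assms by simp
  then show ?thesis unfolding tval_def t0val_def by (simp add: nat_mono floor_mono)
qed

lemma t0val_le_tval:
  assumes "0 < \<epsilon>" "0 < w (Suc k)"
  shows "t0val \<epsilon> w (Suc k) \<le> tval \<epsilon> w (Suc k)"
proof -
  have "real (Wsum w k) + 1 \<le> real (Wsum w (Suc k))" using assms(2) by (simp add: Wsum_Suc)
  then have "\<epsilon> * (real (Wsum w k) + 1) \<le> \<epsilon> * real (Wsum w (Suc k))" using assms(1) by simp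
  then show ?thesis unfolding tval_def t0val_def by (simp add: nat_mono floor_mono)
qed

lemma t0val_le_tval_of_le:
  assumes "0 < \<epsilon>" "\<forall>i. 0 < w i" "1 \<le> u" "u \<le> k"
  shows "t0val \<epsilon> w u \<le> tval \<epsilon> w k"
proof -
  obtain j where "u = Suc j" using assms(3) by (cases u) auto
  then show ?thesis
    using t0val_le_tval[OF assms(1), of w j] tval_mono[OF assms(1,4), of w] assms(2)
    by (simp add: le_trans)
qed

lemma weight_since_bound:
  assumes "0 < \<epsilon>"
  shows "\<epsilon> * (real (Wsum w k) - real (Wsum w (u - 1))) < real (tval \<epsilon> w k) + 1 - real (t0val \<epsilon> w u) + \<epsilon>"
proof -
  have "0 \<le> \<epsilon> * (real (Wsum w (u - 1)) + 1)" "0 \<le> \<epsilon> * real (Wsum w k)"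
    using assms by simp_all
  then have "real (t0val \<epsilon> w u) \<le> \<epsilon> * (real (Wsum w (u - 1)) + 1)"
    and "\<epsilon> * real (Wsum w k) < real (tval \<epsilon> w k) + 1"
    unfolding t0val_def tval_def by linarith+
  then show ?thesis by (simp add: algebra_simps)
qed

definition arrived_mass :: "real \<Rightarrow> (nat \<Rightarrow> nat) \<Rightarrow> nat \<Rightarrow> nat \<Rightarrow> nat \<Rightarrow> nat" where
  "arrived_mass \<epsilon> w k t \<alpha> = (\<Sum>u | 1 \<le> u \<and> u \<le> k \<and> band t (t0val \<epsilon> w u) \<le> \<alpha>. w u)"

lemma arrived_mass_0: "arrived_mass \<epsilon> w 0 t \<alpha> = 0"
  by (simp add: arrived_mass_def)

lemma arrived_mass_Suc:
  "arrived_mass \<epsilon> w (Suc k) t \<alpha> =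
     arrived_mass \<epsilon> w k t \<alpha> + (if band t (t0val \<epsilon> w (Suc k)) \<le> \<alpha> then w (Suc k) else 0)"
proof -
  let ?U = "\<lambda>k. {u. 1 \<le> u \<and> u \<le> k \<and> band t (t0val \<epsilon> w u) \<le> \<alpha>}"
  have "finite (?U k)" by (rule finite_subset[of _ "{..k}"]) auto
  moreover have "?U (Suc k) = (if band t (t0val \<epsilon> w (Suc k)) \<le> \<alpha> then insert (Suc k) (?U k) else ?U k)"
    by (auto simp: le_Suc_eq)
  ultimately show ?thesis unfolding arrived_mass_def by simp
qed

lemma arrived_mass_bound:
  assumes "0 < \<epsilon>" "\<epsilon> < 1" "\<forall>i. 0 < w i"
  shows "\<epsilon> * real (arrived_mass \<epsilon> w k (tval \<epsilon> w k) \<alpha>) < 2 ^ Suc \<alpha>"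
proof -
  define t where "t = tval \<epsilon> w k"
  define U where "U = {u. 1 \<le> u \<and> u \<le> k \<and> band t (t0val \<epsilon> w u) \<le> \<alpha>}"
  have "finite U" by (rule finite_subset[of _ "{..k}"]) (auto simp: U_def)
  show ?thesis
  proof (cases "U = {}")
    case True
    then have "arrived_mass \<epsilon> w k t \<alpha> = 0" unfolding arrived_mass_def U_def[symmetric] by simp
    then show ?thesis unfolding t_def by simp
  next
    case False
    define u where "u = Min U"
    have "u \<in> U" using False \<open>finite U\<close> by (simp add: u_def)
    then have u: "1 \<le> u" "u \<le> k" and band_u: "band t (t0val \<epsilon> w u) \<le> \<alpha>" by (auto simp: U_def)
    have "U \<subseteq> {u..k}" using \<open>finite U\<close> by (auto simp: u_def U_def)
    then have "arrived_mass \<epsilon> w k t \<alpha> \<le> (\<Sum>v = u..k. w v)"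
      unfolding arrived_mass_def U_def[symmetric] by (intro sum_mono2) auto
    then have "arrived_mass \<epsilon> w k t \<alpha> + Wsum w (u - 1) \<le> Wsum w k"
      using Wsum_split[OF u, of w] by simp
    then have "real (arrived_mass \<epsilon> w k t \<alpha>) \<le> real (Wsum w k) - real (Wsum w (u - 1))"
      by (simp flip: of_nat_add of_nat_le_iff)
    then have "\<epsilon> * real (arrived_mass \<epsilon> w k t \<alpha>) \<le> \<epsilon> * (real (Wsum w k) - real (Wsum w (u - 1)))"
      using assms(1) by simp
    moreover have "t0val \<epsilon> w u \<le> t" unfolding t_def using t0val_le_tval_of_le assms u by blast
    then have "t + 2 \<le> t0val \<epsilon> w u + 2 ^ Suc \<alpha>" using band_le_imp_late band_u by blast
    then have "real (t + 2) \<le> real (t0val \<epsilon> w u + 2 ^ Suc \<alpha>)" by (simp only: of_nat_le_iff)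
    ultimately show ?thesis
      using weight_since_bound[OF assms(1), of w k u] assms(2) unfolding t_def by simp
  qed
qed

section \<open>Relative rank views of a summary\<close>

(* views L ! m describes e_(m+1) = L ! m relative to the rank rmin(e_m) + w(e_m) just after its
   predecessor: vlo = g - 1 and vhi = g + \<Delta> - 1, so vG is the paper's G. Unlike rmin and rmax,
   these values are not affected by insertions at other positions. *)
record rank_view =
  vt0 :: nat
  vweight :: nat
  vlo :: int
  vhi :: int

definition rank_after :: "'a entry list \<Rightarrow> nat \<Rightarrow> int" where
  "rank_after L m = rminE L m + wE L m"

definition views :: "'a entry list \<Rightarrow> rank_view list" where
  "views L = map (\<lambda>m. \<lparr>vt0 = et0 (L!m), vweight = ew (L!m),
      vlo = ermin (L!m) - rank_after L m, vhi = ermax (L!m) - rank_after L m\<rparr>) [0..<length L]"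

definition vG :: "rank_view \<Rightarrow> int" where
  "vG e = vlo e + int (vweight e)"

definition lift_view :: "int \<Rightarrow> rank_view \<Rightarrow> rank_view" where
  "lift_view S e = e\<lparr>vlo := vlo e + S, vhi := vhi e + S\<rparr>"

lemma length_views [simp]: "length (views L) = length L"
  by (simp add: views_def)

lemma nth_views:
  "m < length L \<Longrightarrow> views L ! m = \<lparr>vt0 = et0 (L!m), vweight = ew (L!m),
      vlo = ermin (L!m) - rank_after L m, vhi = ermax (L!m) - rank_after L m\<rparr>"
  by (simp add: views_def)

lemma rank_after_0 [simp]: "rank_after L 0 = 1"
  by (simp add: rank_after_def rminE_def wE_def)

lemma rank_after_Suc: "rank_after L (Suc m) = ermin (L!m) + int (ew (L!m))"
  by (simp add: rank_after_def rminE_def wE_def)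

lemma ins_pos_less:
  assumes "L \<noteq> []" "ev (last L) = PInf"
  shows "ins_pos L x < length L"
proof -
  have "length L - 1 < length L \<and> ext_gt (ev (L ! (length L - 1))) x"
    using assms by (simp add: last_conv_nth)
  then show ?thesis unfolding ins_pos_def by (rule LeastI2) simp
qed

lemma last_wqs_insert:
  assumes "ins_pos L x < length L"
  shows "wqs_insert L x wx t0 \<noteq> []" "ev (last (wqs_insert L x wx t0)) = ev (last L)"
  using assms by (simp_all add: wqs_insert_def Let_def last_map)

lemma nth_wqs_insert:
  assumes "ins_pos L x < length L" "m \<le> length L"
  defines "p \<equiv> ins_pos L x"
  shows "wqs_insert L x wx t0 ! m = (if m < p then L ! m
    else if m = p then \<lparr>ev = Fin x, ew = wx, ermin = rank_after L p, ermax = ermax (L!p), et0 = t0\<rparr>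
    else (L!(m-1))\<lparr>ermin := ermin (L!(m-1)) + int wx, ermax := ermax (L!(m-1)) + int wx\<rparr>)"
  using assms by (auto simp: wqs_insert_def Let_def rank_after_def nth_append min_def)

lemma rank_after_wqs_insert:
  assumes "ins_pos L x < length L" "m \<le> length L"
  shows "rank_after (wqs_insert L x wx t0) m =
    (if m \<le> ins_pos L x then rank_after L m else rank_after L (m - 1) + int wx)"
proof (cases m)
  case (Suc j)
  note nth = nth_wqs_insert[OF assms(1), of j wx t0]
  have "j \<le> length L" using assms(2) Suc by simp
  consider "j < ins_pos L x" | "j = ins_pos L x" | "ins_pos L x < j" by linarith
  then show ?thesis
  proof cases
    case 3
    then obtain i where "j = Suc i" by (cases j) auto
    then show ?thesis using 3 nth \<open>j \<le> length L\<close> Suc by (simp add: rank_after_Suc)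
  qed (use nth \<open>j \<le> length L\<close> Suc in \<open>simp_all add: rank_after_Suc\<close>)
qed simp

lemma views_wqs_insert:
  assumes "ins_pos L x < length L"
  defines "p \<equiv> ins_pos L x"
  shows "views (wqs_insert L x wx t0) = take p (views L) @
    [\<lparr>vt0 = t0, vweight = wx, vlo = 0, vhi = ermax (L!p) - rank_after L p\<rparr>] @ drop p (views L)"
proof (rule nth_equalityI)
  have len: "length (wqs_insert L x wx t0) = Suc (length L)"
    using assms by (simp add: wqs_insert_def Let_def)
  then show "length (views (wqs_insert L x wx t0)) = length (take p (views L) @
    [\<lparr>vt0 = t0, vweight = wx, vlo = 0, vhi = ermax (L!p) - rank_after L p\<rparr>] @ drop p (views L))"
    using assms by simp
  fix m assume "m < length (views (wqs_insert L x wx t0))"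
  then have "m \<le> length L" using len by simp
  then show "views (wqs_insert L x wx t0) ! m = (take p (views L) @
    [\<lparr>vt0 = t0, vweight = wx, vlo = 0, vhi = ermax (L!p) - rank_after L p\<rparr>] @ drop p (views L)) ! m"
    using assms len nth_wqs_insert[OF assms(1)] rank_after_wqs_insert[OF assms(1)]
    by (auto simp: nth_views nth_append)
qed

lemma rank_after_delete_block:
  assumes "k \<le> i" "i < length L" "m \<le> length L - i + k"
  shows "rank_after (take k L @ drop i L) m = (if m \<le> k then rank_after L m else rank_after L (m - k + i))"
proof (cases m)
  case (Suc j)
  have nth: "(take k L @ drop i L) ! j = (if j < k then L ! j else L ! (j - k + i))"
    using nth_take_append_drop[of k i L j] assms Suc by simp
  show ?thesis
  proof (cases "m \<le> k")
    case False
    then have "m - k + i = Suc (j - k + i)" using Suc by simp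
    then show ?thesis using False nth Suc by (simp add: rank_after_Suc)
  qed (use nth Suc in \<open>simp add: rank_after_Suc\<close>)
qed simp

lemma views_delete_block:
  assumes "k \<le> i" "i < length L"
  shows "views (take k L @ drop i L) =
    take k (views L) @ [lift_view (rank_after L i - rank_after L k) (views L ! i)] @ drop (Suc i) (views L)"
proof (rule nth_equalityI)
  show "length (views (take k L @ drop i L)) = length (take k (views L) @
      [lift_view (rank_after L i - rank_after L k) (views L ! i)] @ drop (Suc i) (views L))"
    using assms by simp
  fix m assume "m < length (views (take k L @ drop i L))"
  then have m: "m < length L - i + k" using assms by simp
  consider "m < k" | "m = k" | "k < m" by linarith
  then show "views (take k L @ drop i L) ! m = (take k (views L) @
      [lift_view (rank_after L i - rank_after L k) (views L ! i)] @ drop (Suc i) (views L)) ! m"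
  proof cases
    case 3
    then have "m - Suc k + Suc i = m - k + i" "Suc (i + m - Suc k) = m + i - k" by auto
    then show ?thesis using 3 m assms nth_take_append_drop[of k i L m] rank_after_delete_block[of k i L m]
      by (simp add: nth_views nth_append)
  qed (use m assms nth_take_append_drop[of k i L m] rank_after_delete_block[of k i L m] in
       \<open>simp_all add: nth_views nth_append lift_view_def\<close>)
qed

lemma sum_vG_block:
  assumes "k \<le> i" "i \<le> length L"
  shows "sum_list (map vG (take (i - k) (drop k (views L)))) = rank_after L i - rank_after L k"
  using assms
proof (induction i rule: dec_induct)
  case (step i)
  then have "take (Suc i - k) (drop k (views L)) = take (i - k) (drop k (views L)) @ [views L ! i]"
    by (simp add: take_Suc_conv_app_nth Suc_diff_le)
  then show ?case using step by (simp add: nth_views vG_def rank_after_Suc)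
qed simp

lemma GE_eq_rank_after: "GE L m = rank_after L m - rank_after L (m - 1)"
  by (simp add: GE_def gE_def rank_after_def)

lemma GE_Suc_eq_vG: "m < length L \<Longrightarrow> GE L (Suc m) = vG (views L ! m)"
  by (simp add: GE_eq_rank_after rank_after_Suc nth_views vG_def)

lemma sum_GE_telescope:
  assumes "1 \<le> j" "j \<le> n"
  shows "(\<Sum>m = j..<n. GE L m) = rank_after L (n - 1) - rank_after L (j - 1)"
  using assms(2)
proof (induction n rule: dec_induct)
  case (step n)
  then show ?case using assms(1) by (simp add: GE_eq_rank_after)
qed simp

lemma vE_Suc: "m < length L \<Longrightarrow> vE t L (Suc m) = band t (vt0 (views L ! m))"
  by (simp add: vE_def nth_views)

lemma segStart_bounds:
  assumes "1 \<le> i"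
  shows "1 \<le> segStart t L i" "segStart t L i \<le> i"
proof -
  have i: "1 \<le> i \<and> (\<forall>m. i \<le> m \<and> m < i \<longrightarrow> vE t L m < vE t L i)" using assms by simp
  show "segStart t L i \<le> i" unfolding segStart_def by (rule Least_le) (rule i)
  show "1 \<le> segStart t L i" unfolding segStart_def by (rule LeastI2[of _ i]) (use i in auto)
qed

lemma band_less_in_segment:
  assumes "1 \<le> i" "segStart t L i \<le> m" "m < i"
  shows "vE t L m < vE t L i"
proof -
  have i: "1 \<le> i \<and> (\<forall>m. i \<le> m \<and> m < i \<longrightarrow> vE t L m < vE t L i)" using assms by simp
  have "\<forall>m. segStart t L i \<le> m \<and> m < i \<longrightarrow> vE t L m < vE t L i"
    unfolding segStart_def by (rule LeastI2[of _ i]) (use i in auto)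
  then show ?thesis using assms(2,3) by blast
qed

lemma GstarE_eq_rank_after:
  assumes "1 \<le> i"
  shows "GstarE t L i = rank_after L i - rank_after L (segStart t L i - 1)"
proof -
  have "GstarE t L i = GE L i + (rank_after L (i - 1) - rank_after L (segStart t L i - 1))"
    unfolding GstarE_def using sum_GE_telescope[OF segStart_bounds[OF assms]] by simp
  then show ?thesis by (simp add: GE_eq_rank_after)
qed

lemma gE_plus_DeltaE_Suc:
  "i < length L \<Longrightarrow> gE L (Suc i) + DeltaE L (Suc i) = vhi (views L ! i) + 1"
  by (simp add: gE_def DeltaE_def rank_after_def rminE_def rmaxE_def nth_views)

lemma deletable_band_le:
  assumes "deletable t L i" "segStart t L i \<le> Suc m" "m < i"
  shows "vE t L (Suc m) \<le> vE t L (Suc i)"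
proof -
  have "1 \<le> i" "vE t L i \<le> vE t L (Suc i)" using assms(1) by (auto simp: deletable_def)
  moreover have "vE t L (Suc m) \<le> vE t L i"
  proof (cases "Suc m = i")
    case False
    then show ?thesis using band_less_in_segment[OF \<open>1 \<le> i\<close> assms(2)] assms(3) by simp
  qed simp
  ultimately show ?thesis by simp
qed

(* B holds the views of seg(e_i) and e_i; views L ! i is the view of the survivor e_(i+1). *)
lemma views_delete_seg:
  assumes del: "deletable t L i"
  obtains j B where
    "views (delete_seg t L i) =
       take j (views L) @ [lift_view (sum_list (map vG B)) (views L ! i)] @ drop (Suc i) (views L)"
    "views L = take j (views L) @ B @ [views L ! i] @ drop (Suc i) (views L)"
    "\<forall>b\<in>set B. band t (vt0 b) \<le> band t (vt0 (views L ! i))"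
    "sum_list (map vG B) + vhi (views L ! i) + 1 \<le> int t"
proof -
  define V where "V = views L"
  have i: "1 \<le> i" "i < length L" using del by (auto simp: deletable_def)
  define j where "j = segStart t L i - 1"
  have "j \<le> i" using segStart_bounds(2)[OF i(1), of t L] by (simp add: j_def)
  define B where "B = take (i - j) (drop j V)"
  have S: "sum_list (map vG B) = rank_after L i - rank_after L j"
    unfolding B_def V_def using \<open>j \<le> i\<close> i(2) by (simp add: sum_vG_block)
  have "views (delete_seg t L i) = take j V @ [lift_view (sum_list (map vG B)) (V ! i)] @ drop (Suc i) V"
    unfolding delete_seg_def j_def[symmetric] S V_def using views_delete_block \<open>j \<le> i\<close> i(2) .
  moreover have "V = take j V @ B @ [V ! i] @ drop (Suc i) V"
    unfolding B_def using \<open>j \<le> i\<close> i(2) by (intro take_drop_nth_decomp) (simp_all add: V_def)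
  moreover have "\<forall>b\<in>set B. band t (vt0 b) \<le> band t (vt0 (V ! i))"
  proof
    fix b assume "b \<in> set B"
    then obtain m where "j \<le> m" "m < i" "b = V ! m"
      unfolding B_def by (rule in_set_take_drop_nth)
    then show "band t (vt0 b) \<le> band t (vt0 (V ! i))"
      using deletable_band_le[OF del, of m] i(2) by (simp add: j_def V_def vE_Suc)
  qed
  moreover have "sum_list (map vG B) + vhi (V ! i) + 1 \<le> int t"
    using del GstarE_eq_rank_after[OF i(1), of t L] gE_plus_DeltaE_Suc[OF i(2)]
    by (simp add: deletable_def S j_def V_def)
  ultimately show ?thesis using that unfolding V_def by blast
qed

section \<open>The band mass invariant\<close>

definition view_ok :: "nat \<Rightarrow> rank_view \<Rightarrow> bool" where
  "view_ok t e \<longleftrightarrow>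
     1 \<le> vweight e \<and> 0 \<le> vlo e \<and> vhi e \<le> int t \<and> vhi e - vlo e \<le> int (vt0 e) \<and> vt0 e \<le> t"

definition stored_mass :: "nat \<Rightarrow> nat \<Rightarrow> rank_view list \<Rightarrow> int" where
  "stored_mass t \<alpha> V = sum_list (map vG (filter (\<lambda>e. band t (vt0 e) \<le> \<alpha>) V))"

(* The extra 1 is the G-value of the stored +\<infinity>, which is not an update. *)
definition wqs_invariant :: "real \<Rightarrow> (nat \<Rightarrow> nat) \<Rightarrow> nat \<Rightarrow> 'a entry list \<Rightarrow> bool" where
  "wqs_invariant \<epsilon> w k L \<longleftrightarrow> L \<noteq> [] \<and> ev (last L) = PInf \<and>
     (\<forall>e\<in>set (views L). view_ok (tval \<epsilon> w k) e) \<and>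
     (\<forall>t \<alpha>. tval \<epsilon> w k \<le> t \<longrightarrow> stored_mass t \<alpha> (views L) \<le> int (arrived_mass \<epsilon> w k t \<alpha>) + 1)"

lemma view_ok_mono: "view_ok t e \<Longrightarrow> t \<le> t' \<Longrightarrow> view_ok t' e"
  unfolding view_ok_def by auto

lemma view_ok_lift:
  "view_ok t e \<Longrightarrow> 0 \<le> S \<Longrightarrow> vhi e + S \<le> int t \<Longrightarrow> view_ok t (lift_view S e)"
  unfolding view_ok_def lift_view_def by simp

lemma vG_nonneg: "view_ok t e \<Longrightarrow> 0 \<le> vG e"
  unfolding view_ok_def vG_def by simp

lemma GE_nonneg:
  assumes "\<forall>e\<in>set (views L). view_ok t e" "1 \<le> n" "n \<le> length L"
  shows "0 \<le> GE L n"
proof -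
  obtain m where m: "n = Suc m" "m < length L" using assms(2,3) by (cases n) auto
  then have "view_ok t (views L ! m)" using assms(1) by simp
  then show ?thesis using GE_Suc_eq_vG[OF m(2)] vG_nonneg m(1) by simp
qed

lemma stored_mass_append [simp]:
  "stored_mass t \<alpha> (xs @ ys) = stored_mass t \<alpha> xs + stored_mass t \<alpha> ys"
  by (simp add: stored_mass_def)

lemma stored_mass_nonneg: "\<forall>e\<in>set V. view_ok t e \<Longrightarrow> 0 \<le> stored_mass t' \<alpha> V"
  unfolding stored_mass_def by (auto intro!: sum_list_nonneg vG_nonneg)

lemma stored_mass_merge:
  assumes ok: "view_ok t e" "\<forall>b\<in>set B. view_ok t b"
    and lower: "\<forall>b\<in>set B. band t (vt0 b) \<le> band t (vt0 e)" and "t \<le> t'"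
  shows "stored_mass t' \<alpha> [lift_view (sum_list (map vG B)) e] \<le> stored_mass t' \<alpha> (B @ [e])"
proof (cases "band t' (vt0 e) \<le> \<alpha>")
  case True
  have "band t' (vt0 b) \<le> \<alpha>" if "b \<in> set B" for b
    using band_le_mono_time[of "vt0 b" t "vt0 e" t'] True that ok lower \<open>t \<le> t'\<close>
    unfolding view_ok_def by fastforce
  then have "filter (\<lambda>b. band t' (vt0 b) \<le> \<alpha>) B = B" by simp
  then show ?thesis using True by (simp add: stored_mass_def lift_view_def vG_def)
next
  case False
  then show ?thesis using stored_mass_nonneg ok by (simp add: stored_mass_def lift_view_def)
qed

lemma wqs_invariant_init: "wqs_invariant \<epsilon> w 0 wqs_init"
proof -
  have "views (wqs_init :: 'a entry list) = [\<lparr>vt0 = 0, vweight = 1, vlo = 0, vhi = 0\<rparr>]"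
    by (simp add: views_def wqs_init_def)
  then show ?thesis
    by (simp add: wqs_invariant_def wqs_init_def view_ok_def stored_mass_def vG_def arrived_mass_0)
qed

lemma wqs_invariant_insert:
  assumes inv: "wqs_invariant \<epsilon> w k L" and "0 < \<epsilon>" "0 < w (Suc k)"
  shows "wqs_invariant \<epsilon> w (Suc k) (wqs_insert L x (w (Suc k)) (t0val \<epsilon> w (Suc k)))"
proof -
  let ?t = "tval \<epsilon> w k" and ?t' = "tval \<epsilon> w (Suc k)" and ?born = "t0val \<epsilon> w (Suc k)"
  define p where "p = ins_pos L x"
  define V where "V = views L"
  have ne: "L \<noteq> []" and last: "ev (last L) = PInf" and ok: "\<forall>e\<in>set V. view_ok ?t e"
    and mass: "\<And>t \<alpha>. ?t \<le> t \<Longrightarrow> stored_mass t \<alpha> V \<le> int (arrived_mass \<epsilon> w k t \<alpha>) + 1"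
    using inv unfolding wqs_invariant_def V_def by auto
  have p: "p < length L" unfolding p_def using ins_pos_less[OF ne last] .
  define new where "new = \<lparr>vt0 = ?born, vweight = w (Suc k), vlo = 0, vhi = ermax (L!p) - rank_after L p\<rparr>"
  have V': "views (wqs_insert L x (w (Suc k)) ?born) = take p V @ [new] @ drop p V"
    unfolding new_def V_def p_def by (rule views_wqs_insert[OF p[unfolded p_def]])
  have "?t \<le> ?t'" using tval_mono \<open>0 < \<epsilon>\<close> by simp
  have "vhi (V ! p) \<le> int ?t" using ok p unfolding V_def view_ok_def by simp
  then have "view_ok ?t' new"
    using tval_le_t0val_Suc[of \<epsilon> w k] t0val_le_tval[of \<epsilon> w k] \<open>?t \<le> ?t'\<close> assms(2,3) p
    unfolding new_def view_ok_def V_def by (simp add: nth_views)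
  then have ok': "\<forall>e\<in>set (take p V @ [new] @ drop p V). view_ok ?t' e"
    using ok view_ok_mono[OF _ \<open>?t \<le> ?t'\<close>] by (auto dest: in_set_takeD in_set_dropD)
  have "stored_mass t \<alpha> (take p V @ [new] @ drop p V) \<le> int (arrived_mass \<epsilon> w (Suc k) t \<alpha>) + 1"
    if "?t' \<le> t" for t \<alpha>
  proof -
    have "stored_mass t \<alpha> (take p V @ [new] @ drop p V) = stored_mass t \<alpha> V + stored_mass t \<alpha> [new]"
      using append_take_drop_id[of p V] stored_mass_append by (metis add.commute add.left_commute)
    also have "\<dots> \<le> int (arrived_mass \<epsilon> w k t \<alpha>) + 1 + stored_mass t \<alpha> [new]"
      using mass[of t \<alpha>] \<open>?t \<le> ?t'\<close> that by simp
    also have "\<dots> = int (arrived_mass \<epsilon> w (Suc k) t \<alpha>) + 1"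
      by (simp add: arrived_mass_Suc stored_mass_def new_def vG_def)
    finally show ?thesis .
  qed
  then show ?thesis
    using ok' V' last_wqs_insert[OF p[unfolded p_def]] last unfolding wqs_invariant_def by simp
qed

lemma wqs_invariant_delete:
  assumes inv: "wqs_invariant \<epsilon> w k L" and step: "del_step (tval \<epsilon> w k) L L'"
  shows "wqs_invariant \<epsilon> w k L'"
proof -
  let ?t = "tval \<epsilon> w k"
  define V where "V = views L"
  have ok: "\<forall>e\<in>set V. view_ok ?t e"
    and mass: "\<And>t \<alpha>. ?t \<le> t \<Longrightarrow> stored_mass t \<alpha> V \<le> int (arrived_mass \<epsilon> w k t \<alpha>) + 1"
    using inv unfolding wqs_invariant_def V_def by auto
  obtain i where del: "deletable ?t L i" and L': "L' = delete_seg ?t L i"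
    using step del_step_def by blast
  obtain j B where V': "views L' = take j V @ [lift_view (sum_list (map vG B)) (V ! i)] @ drop (Suc i) V"
    and V: "V = take j V @ B @ [V ! i] @ drop (Suc i) V"
    and lower: "\<forall>b\<in>set B. band ?t (vt0 b) \<le> band ?t (vt0 (V ! i))"
    and cost: "sum_list (map vG B) + vhi (V ! i) + 1 \<le> int ?t"
    using views_delete_seg[OF del] unfolding L'[symmetric] V_def[symmetric] by blast
  have "set B \<subseteq> set V" "V ! i \<in> set V" using arg_cong[OF V, of set] by auto
  then have ok_B: "\<forall>b\<in>set B. view_ok ?t b" and ok_i: "view_ok ?t (V ! i)" using ok by auto
  have "0 \<le> sum_list (map vG B)" using ok_B by (auto intro!: sum_list_nonneg vG_nonneg)
  then have "view_ok ?t (lift_view (sum_list (map vG B)) (V ! i))"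
    using view_ok_lift ok_i cost by simp
  then have ok': "\<forall>e\<in>set (views L'). view_ok ?t e"
    unfolding V' using ok by (auto dest: in_set_takeD in_set_dropD)
  have "stored_mass t \<alpha> (views L') \<le> int (arrived_mass \<epsilon> w k t \<alpha>) + 1" if "?t \<le> t" for t \<alpha>
  proof -
    have "stored_mass t \<alpha> [lift_view (sum_list (map vG B)) (V ! i)] \<le> stored_mass t \<alpha> (B @ [V ! i])"
      using stored_mass_merge[OF ok_i ok_B lower that] .
    moreover have "stored_mass t \<alpha> V = stored_mass t \<alpha> (take j V) + stored_mass t \<alpha> (B @ [V ! i])
        + stored_mass t \<alpha> (drop (Suc i) V)"
      using arg_cong[OF V, of "stored_mass t \<alpha>"] by (simp add: stored_mass_def)
    ultimately have "stored_mass t \<alpha> (views L') \<le> stored_mass t \<alpha> V"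
      unfolding V' stored_mass_append by linarith
    then show ?thesis using mass[OF that, of \<alpha>] by linarith
  qed
  moreover have "L' \<noteq> []" "ev (last L') = PInf"
    using inv del by (auto simp: L' delete_seg_def deletable_def wqs_invariant_def)
  ultimately show ?thesis using ok' unfolding wqs_invariant_def by blast
qed

lemma wqs_invariant_reach:
  assumes "gk_reach \<epsilon> x w k L" "0 < \<epsilon>" "\<forall>i. 0 < w i"
  shows "wqs_invariant \<epsilon> w k L"
  using assms(1)
proof (induction rule: gk_reach.induct)
  case init
  then show ?case by (rule wqs_invariant_init)
next
  case (step k L L')
  have "wqs_invariant \<epsilon> w (Suc k) (wqs_insert L (x (Suc k)) (w (Suc k)) (t0val \<epsilon> w (Suc k)))"
    using wqs_invariant_insert[OF step.IH assms(2)] assms(3) by blast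
  with step.hyps(2) show ?case
    by (induction rule: rtranclp_induct) (auto intro: wqs_invariant_delete)
qed

lemma gk_reach_not_deletable:
  "gk_reach \<epsilon> x w k L \<Longrightarrow> \<not> deletable (tval \<epsilon> w k) L i"
  by (induction rule: gk_reach.induct) (auto simp: deletable_def wqs_init_def)

section \<open>Counting type-2 elements\<close>

definition type2_band :: "nat \<Rightarrow> 'a entry list \<Rightarrow> nat \<Rightarrow> nat set" where
  "type2_band t L \<alpha> =
     {i. 1 \<le> i \<and> i < length L \<and> \<not> vE t L (Suc i) < vE t L i \<and> vE t L (Suc i) = \<alpha>}"

(* The indices of seg(e_i), e_i and e_(i+1). *)
definition window :: "nat \<Rightarrow> 'a entry list \<Rightarrow> nat \<Rightarrow> nat set" where
  "window t L i = {segStart t L i..Suc i}"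

lemma finite_type2_band: "finite (type2_band t L \<alpha>)"
  by (rule finite_subset[of _ "{..<length L}"]) (auto simp: type2_band_def)

lemma window_mass:
  assumes ok: "view_ok t (views L ! i)" and nodel: "\<not> deletable t L i"
    and i: "1 \<le> i" "i < length L" "\<not> vE t L (Suc i) < vE t L i"
  shows "int t - int (vt0 (views L ! i)) + 1 \<le> (\<Sum>n\<in>window t L i. GE L n)"
proof -
  let ?j = "segStart t L i" and ?e = "views L ! i"
  have "1 \<le> ?j" "?j \<le> Suc (Suc i)" using segStart_bounds[OF i(1), of t L] by auto
  have "window t L i = {?j..<Suc (Suc i)}" by (auto simp: window_def)
  then have "(\<Sum>n\<in>window t L i. GE L n) = rank_after L (Suc i) - rank_after L (?j - 1)"
    using sum_GE_telescope[OF \<open>1 \<le> ?j\<close> \<open>?j \<le> Suc (Suc i)\<close>] by (simp only: diff_Suc_1)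
  also have "rank_after L (Suc i) = rank_after L i + vG ?e"
    using i(2) by (simp add: rank_after_Suc nth_views vG_def)
  finally have "(\<Sum>n\<in>window t L i. GE L n) = GstarE t L i + vG ?e"
    using GstarE_eq_rank_after[OF i(1), of t L] by simp
  moreover have "int t < GstarE t L i + vhi ?e + 1"
    using nodel i gE_plus_DeltaE_Suc[OF i(2)] by (auto simp: deletable_def)
  ultimately show ?thesis using ok unfolding view_ok_def vG_def by linarith
qed

lemma window_mass_lower:
  assumes ok: "view_ok t (views L ! i)" and nodel: "\<not> deletable t L i"
    and i: "i \<in> type2_band t L \<alpha>"
  shows "2 ^ \<alpha> \<le> 2 * (\<Sum>n\<in>window t L i. GE L n)"
proof -
  have i': "1 \<le> i" "i < length L" "\<not> vE t L (Suc i) < vE t L i" and band: "vE t L (Suc i) = \<alpha>"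
    using i by (auto simp: type2_band_def)
  have "vt0 (views L ! i) \<le> t" using ok by (simp add: view_ok_def)
  then have "2 ^ \<alpha> \<le> 2 * (t - vt0 (views L ! i) + 1)"
    using power_band_le band vE_Suc[OF i'(2)] by metis
  then have "int (2 ^ \<alpha>) \<le> int (2 * (t - vt0 (views L ! i) + 1))" by (simp only: of_nat_le_iff)
  then have "(2::int) ^ \<alpha> \<le> 2 * (int t - int (vt0 (views L ! i)) + 1)"
    using \<open>vt0 (views L ! i) \<le> t\<close> by (simp add: of_nat_diff)
  moreover have "2 * (int t - int (vt0 (views L ! i)) + 1) \<le> 2 * (\<Sum>n\<in>window t L i. GE L n)"
    using window_mass[OF ok nodel i'] by simp
  ultimately show ?thesis by (rule order_trans)
qed

lemma window_in_low_bands: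
  assumes "i \<in> type2_band t L \<alpha>" "n \<in> window t L i"
  shows "1 \<le> n" "n \<le> length L" "vE t L n \<le> \<alpha>"
proof -
  have i: "1 \<le> i" "i < length L" "vE t L i \<le> \<alpha>" "vE t L (Suc i) = \<alpha>"
    using assms(1) by (auto simp: type2_band_def)
  have n: "segStart t L i \<le> n" "n \<le> Suc i" using assms(2) by (auto simp: window_def)
  show "1 \<le> n" using segStart_bounds(1)[OF i(1), of t L] n(1) by linarith
  show "n \<le> length L" using n(2) i(2) by simp
  show "vE t L n \<le> \<alpha>"
  proof (cases "n < i")
    case True
    then show ?thesis using band_less_in_segment[OF i(1) n(1)] i(3) by simp
  next
    case False
    then have "n = i \<or> n = Suc i" using n(2) by linarith
    then show ?thesis using i by auto
  qed
qed

lemma card_windows_containing_le_2: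
  "card {i \<in> type2_band t L \<alpha>. n \<in> window t L i} \<le> 2"
proof (rule card_le_2_if_consecutive)
  show "finite {i \<in> type2_band t L \<alpha>. n \<in> window t L i}" using finite_type2_band[of t L \<alpha>] by simp
next
  fix a b assume a: "a \<in> {i \<in> type2_band t L \<alpha>. n \<in> window t L i}"
    and b: "b \<in> {i \<in> type2_band t L \<alpha>. n \<in> window t L i}" and "a < b"
  show "b = Suc a"
  proof (rule ccontr)
    assume "b \<noteq> Suc a"
    then have "Suc a < b" using \<open>a < b\<close> by simp
    moreover have "segStart t L b \<le> Suc a" using a b by (auto simp: window_def)
    moreover have "1 \<le> b" using b by (simp add: type2_band_def)
    ultimately have "vE t L (Suc a) < vE t L b" using band_less_in_segment[of b t L "Suc a"] by simp
    then show False using a b by (auto simp: type2_band_def)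
  qed
qed

lemma stored_mass_eq_sum_GE:
  "stored_mass t \<alpha> (views L) = (\<Sum>n = 1..length L. if vE t L n \<le> \<alpha> then GE L n else 0)"
proof -
  have "stored_mass t \<alpha> (views L) =
      (\<Sum>m = 0..<length L. if band t (vt0 (views L ! m)) \<le> \<alpha> then vG (views L ! m) else 0)"
    unfolding stored_mass_def sum_list_map_filter' by (simp add: sum_list_sum_nth)
  also have "\<dots> = (\<Sum>m = 0..<length L. if vE t L (Suc m) \<le> \<alpha> then GE L (Suc m) else 0)"
    by (intro sum.cong) (simp_all add: vE_Suc GE_Suc_eq_vG)
  also have "\<dots> = (\<Sum>n = Suc 0..<Suc (length L). if vE t L n \<le> \<alpha> then GE L n else 0)"
    by (subst sum.shift_bounds_Suc_ivl) simp
  also have "{Suc 0..<Suc (length L)} = {1..length L}" by auto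
  finally show ?thesis .
qed

lemma card_type2_band_mass:
  assumes ok: "\<forall>e\<in>set (views L). view_ok t e" and nodel: "\<forall>i. \<not> deletable t L i"
  shows "int (card (type2_band t L \<alpha>)) * 2 ^ \<alpha> \<le> 4 * stored_mass t \<alpha> (views L)"
proof -
  let ?F = "type2_band t L \<alpha>" and ?N = "{1..length L}"
  let ?mult = "\<lambda>n. {i \<in> ?F. n \<in> window t L i}"
  have ok_i: "view_ok t (views L ! i)" if "i \<in> ?F" for i
    using ok that by (simp add: type2_band_def)
  have window_N: "{n \<in> ?N. n \<in> window t L i} = window t L i" if "i \<in> ?F" for i
    using window_in_low_bands[OF that] by auto
  have "int (card ?F) * 2 ^ \<alpha> = (\<Sum>i\<in>?F. 2 ^ \<alpha>)" by simp
  also have "\<dots> \<le> (\<Sum>i\<in>?F. 2 * (\<Sum>n\<in>window t L i. GE L n))"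
    using window_mass_lower[OF ok_i nodel[rule_format]] by (intro sum_mono) blast
  also have "\<dots> = 2 * (\<Sum>i\<in>?F. \<Sum>n\<in>{n \<in> ?N. n \<in> window t L i}. GE L n)"
    unfolding sum_distrib_left using window_N by (intro sum.cong) simp_all
  also have "(\<Sum>i\<in>?F. \<Sum>n\<in>{n \<in> ?N. n \<in> window t L i}. GE L n) = (\<Sum>n\<in>?N. \<Sum>i\<in>?mult n. GE L n)"
    using finite_type2_band by (intro sum.swap_restrict) auto
  also have "\<dots> \<le> (\<Sum>n\<in>?N. 2 * (if vE t L n \<le> \<alpha> then GE L n else 0))"
  proof (intro sum_mono)
    fix n assume "n \<in> ?N"
    show "(\<Sum>i\<in>?mult n. GE L n) \<le> 2 * (if vE t L n \<le> \<alpha> then GE L n else 0)"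
    proof (cases "vE t L n \<le> \<alpha>")
      case True
      have "int (card (?mult n)) * GE L n \<le> 2 * GE L n"
        using card_windows_containing_le_2 GE_nonneg[OF ok] \<open>n \<in> ?N\<close>
        by (intro mult_right_mono) auto
      then show ?thesis using True by simp
    next
      case False
      then have "?mult n = {}" using window_in_low_bands(3) by fastforce
      then show ?thesis unfolding \<open>?mult n = {}\<close> using False by simp
    qed
  qed
  finally show ?thesis by (simp add: stored_mass_eq_sum_GE sum_distrib_left)
qed

lemma card_type2_band_le:
  assumes "0 < \<epsilon>" "\<epsilon> < 1" "\<forall>i. 0 < w i"
    and inv: "wqs_invariant \<epsilon> w k L" and nodel: "\<forall>i. \<not> deletable (tval \<epsilon> w k) L i"
  shows "real (card (type2_band (tval \<epsilon> w k) L \<alpha>)) \<le> 16 / \<epsilon>"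
proof -
  let ?c = "card (type2_band (tval \<epsilon> w k) L \<alpha>)" and ?m = "arrived_mass \<epsilon> w k (tval \<epsilon> w k) \<alpha>"
  have ok: "\<forall>e\<in>set (views L). view_ok (tval \<epsilon> w k) e"
    and mass: "stored_mass (tval \<epsilon> w k) \<alpha> (views L) \<le> int ?m + 1"
    using inv unfolding wqs_invariant_def by simp_all
  have "int ?c * 2 ^ \<alpha> \<le> 4 * (int ?m + 1)"
    using order_trans[OF card_type2_band_mass[OF ok nodel] mult_left_mono[OF mass]] by simp
  then have "real_of_int (int ?c * 2 ^ \<alpha>) \<le> real_of_int (4 * (int ?m + 1))"
    by (simp only: of_int_le_iff)
  then have "real ?c * 2 ^ \<alpha> \<le> 4 * (real ?m + 1)" by simp
  then have "\<epsilon> * (real ?c * 2 ^ \<alpha>) \<le> \<epsilon> * (4 * (real ?m + 1))"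
    using \<open>0 < \<epsilon>\<close> by (intro mult_left_mono) simp_all
  also have "\<dots> = 4 * (\<epsilon> * real ?m + \<epsilon>)" by (simp add: algebra_simps)
  also have "\<dots> \<le> 4 * (4 * 2 ^ \<alpha>)"
  proof -
    have "\<epsilon> * real ?m < 2 * 2 ^ \<alpha>" using arrived_mass_bound[OF assms(1-3), of k \<alpha>] by simp
    moreover have "(1::real) \<le> 2 ^ \<alpha>" by simp
    ultimately have "\<epsilon> * real ?m + \<epsilon> \<le> 4 * 2 ^ \<alpha>" using \<open>\<epsilon> < 1\<close> by linarith
    then show ?thesis by simp
  qed
  finally have "(\<epsilon> * real ?c) * 2 ^ \<alpha> \<le> 16 * 2 ^ \<alpha>" by (simp add: mult.assoc)
  then have "\<epsilon> * real ?c \<le> 16" by simp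
  then show ?thesis using \<open>0 < \<epsilon>\<close> by (simp add: field_simps)
qed

lemma type2_count_le_sum_bands:
  assumes "\<forall>i<length L. vE t L (Suc i) \<le> A"
  shows "type2_count t L \<le> (\<Sum>\<alpha>\<le>A. card (type2_band t L \<alpha>))"
proof -
  have "type2_count t L \<le> card (\<Union>\<alpha>\<le>A. type2_band t L \<alpha>)"
    unfolding type2_count_def using assms finite_type2_band
    by (intro card_mono) (auto simp: type2_band_def)
  also have "\<dots> \<le> (\<Sum>\<alpha>\<le>A. card (type2_band t L \<alpha>))" by (rule card_UN_le) simp
  finally show ?thesis .
qed

theorem mainTheorem9:
  "\<exists>C>0. \<forall>(\<epsilon>::real) (x :: nat \<Rightarrow> 'a::linorder) (w :: nat \<Rightarrow> nat) k L.
     0 < \<epsilon> \<and> \<epsilon> < 1 \<and> (\<forall>i. 0 < w i) \<and> gk_reach \<epsilon> x w k L \<and> 2 \<le> tval \<epsilon> w k \<longrightarrow>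
     real (type2_count (tval \<epsilon> w k) L) \<le> C * (1 / \<epsilon>) * log 2 (real (tval \<epsilon> w k))"
proof (intro exI[of _ 48] conjI allI impI)
  fix \<epsilon> :: real and x :: "nat \<Rightarrow> 'a" and w k L
  assume "0 < \<epsilon> \<and> \<epsilon> < 1 \<and> (\<forall>i. 0 < w i) \<and> gk_reach \<epsilon> x w k L \<and> 2 \<le> tval \<epsilon> w k"
  then have \<epsilon>: "0 < \<epsilon>" "\<epsilon> < 1" and w: "\<forall>i. 0 < w i" and reach: "gk_reach \<epsilon> x w k L"
    and t: "2 \<le> tval \<epsilon> w k" by auto
  define t where "t = tval \<epsilon> w k"
  define A where "A = nat \<lfloor>log 2 (real t)\<rfloor> + 1"
  have inv: "wqs_invariant \<epsilon> w k L" using wqs_invariant_reach[OF reach \<epsilon>(1) w] .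
  have "vE t L (Suc i) \<le> A" if "i < length L" for i
    using inv that floor_log_bounds(1)[of t] t band_le_if_less_power
    by (simp add: A_def t_def wqs_invariant_def vE_Suc view_ok_def)
  then have "real (type2_count t L) \<le> (\<Sum>\<alpha>\<le>A. real (card (type2_band t L \<alpha>)))"
    using type2_count_le_sum_bands by (metis of_nat_le_iff of_nat_sum)
  also have "\<dots> \<le> (\<Sum>\<alpha>\<le>A. 16 / \<epsilon>)"
    using card_type2_band_le[OF \<epsilon> w inv] gk_reach_not_deletable[OF reach]
    by (intro sum_mono) (simp add: t_def)
  also have "\<dots> = (real A + 1) * (16 / \<epsilon>)" by simp
  also have "\<dots> \<le> 3 * log 2 (real t) * (16 / \<epsilon>)"
    using floor_log_bounds(2)[of t] t \<epsilon>(1) by (intro mult_right_mono) (simp_all add: A_def t_def)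
  finally show "real (type2_count (tval \<epsilon> w k) L) \<le> 48 * (1 / \<epsilon>) * log 2 (real (tval \<epsilon> w k))"
    by (simp add: t_def)
qed simp

end
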